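(* Let $X$ and $Y$ be compact metric spaces with their Borel $\sigma$-algebras, $\nu$ a Borel probability on $X$ and $\pi$ a Borel probability on $X\times Y$. Then \[H^{\nu}(\pi)=-\sup\Big\{\int f\,d\pi\ :\ f:X\times Y\to\mathbb{R}\ \text{Lipschitz},\ \int e^{f(x,y)}\,d\nu(x)=1\ \forall y\in Y\Big\}.\]
   Context: $\mathcal{F}(\pi)$ is the set of measurable functions whose $\pi$-integral is well defined (not $+\infty-\infty$), and $H^{\nu}(\pi)=-\sup\{\int c\,d\pi:\ c\in\mathcal{F}(\pi),\ \int e^{c(x,y)}\,d\nu(x)=1\ \forall y\in Y\}$ (supremum over measurable functions). *)

theory Defs
  imports "HOL-Probability.Probability"
begin

definition ext_integral :: "'a measure \<Rightarrow> ('a \<Rightarrow> real) \<Rightarrow> ereal" where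
  "ext_integral M c =
     enn2ereal (\<integral>\<^sup>+ x. ennreal (c x) \<partial>M) - enn2ereal (\<integral>\<^sup>+ x. ennreal (- c x) \<partial>M)"

definition wd_functions :: "'a measure \<Rightarrow> ('a \<Rightarrow> real) set" where
  "wd_functions M = {c \<in> borel_measurable M.
      \<not> ((\<integral>\<^sup>+ x. ennreal (c x) \<partial>M) = \<infinity> \<and> (\<integral>\<^sup>+ x. ennreal (- c x) \<partial>M) = \<infinity>)}"

definition H_nu :: "'a measure \<Rightarrow> ('a \<times> 'b) measure \<Rightarrow> ereal" where
  "H_nu \<nu> \<pi> = - (SUP c \<in> {c \<in> wd_functions \<pi>.
        \<forall>y. (\<integral>\<^sup>+ x. ennreal (exp (c (x, y))) \<partial>\<nu>) = 1}. ext_integral \<pi> c)"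

end

theory Submission
  imports Defs
begin

text \<open>
  Lipschitz functions on the compact space \<open>X \<times> Y\<close> are bounded, hence integrable and admissible
  for \<open>H\<^sup>\<nu>\<close>, which gives one inequality. Conversely, an admissible \<open>c\<close> is the limit of its
  truncations \<open>max (-n) (min n c)\<close>, whose \<open>\<nu>\<close>-normalisers are at most \<open>1 + exp (-n)\<close>. A bounded
  Borel \<open>g\<close> with \<open>\<bar>g\<bar> \<le> M\<close> and normalisers at most \<open>K\<close> is approximated by a Lipschitz \<open>f\<close> with
  \<open>\<bar>f\<bar> \<le> M\<close> simultaneously in \<open>L^1(\<pi>)\<close> and in \<open>L^1(\<nu> \<otimes> \<pi>\<^sub>Y)\<close>, where \<open>\<pi>\<^sub>Y\<close> is the \<open>Y\<close>-marginal
  of \<open>\<pi>\<close>: indicators of open sets are pointwise limits of Lipschitz functions, and Dynkin's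
  lemma extends this to all Borel sets. The renormalised function \<open>f(x,y) - ln Z\<^sub>f(y)\<close>, where
  \<open>Z\<^sub>f(y) = \<integral> exp (f(x,y)) d\<nu>(x)\<close>, is again Lipschitz and admissible, and
  \<open>ln Z\<^sub>f(y) \<le> ln K + exp M / K \<cdot> \<integral> \<bar>f - g\<bar>(x,y) d\<nu>(x)\<close>. Integrating over \<open>\<pi>\<close> only sees \<open>\<pi>\<^sub>Y\<close>,
  so this error is an \<open>L^1(\<nu> \<otimes> \<pi>\<^sub>Y)\<close> distance. Hence \<open>\<integral> g d\<pi> - ln K\<close> is bounded by the Lipschitz
  supremum, and monotone convergence in \<open>n\<close> finishes the proof.
\<close>

section \<open>Borel sets of a product of compact metric spaces\<close>

lemma compact_space_open_Union_compact_subsets: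
  fixes W :: "'c::metric_space set"
  assumes "compact (UNIV :: 'c set)" "open W"
  obtains K :: "nat \<Rightarrow> 'c set" where "\<And>n. compact (K n)" "\<And>n. K n \<subseteq> W" "W = (\<Union>n. K n)"
proof (cases "W = UNIV")
  case True
  then show ?thesis using assms(1) by (intro that[of "\<lambda>n. UNIV"]) auto
next
  case False
  define K where "K n = {z. 1 / real (Suc n) \<le> infdist z (- W)}" for n
  show ?thesis
  proof (rule that)
    show "compact (K n)" for n
    proof -
      have "closed (K n)" unfolding K_def
        by (intro closed_Collect_le continuous_intros continuous_on_infdist) auto
      then show ?thesis using assms(1) compact_Int_closed[of UNIV "K n"] by simp
    qed
    show "K n \<subseteq> W" for n
    proof
      fix z assume "z \<in> K n"
      then have "0 < infdist z (- W)"
        unfolding K_def by (auto intro: order.strict_trans2[of 0 "1 / real (Suc n)"])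
      then show "z \<in> W" by (metis ComplI infdist_zero less_irrefl)
    qed
    have "z \<in> (\<Union>n. K n)" if "z \<in> W" for z
    proof -
      have "- W \<noteq> {}" using False by auto
      then have "infdist z (- W) > 0"
        using that assms(2) in_closed_iff_infdist_zero[of "- W" z] infdist_nonneg[of z "- W"]
        by (auto simp: closed_Compl)
      then obtain n where "1 / real (Suc n) < infdist z (- W)" using nat_approx_posE by blast
      then show ?thesis unfolding K_def by (auto intro: less_imp_le)
    qed
    then show "W = (\<Union>n. K n)" using \<open>\<And>n. K n \<subseteq> W\<close> by blast
  qed
qed

text \<open>
  The library's \<open>borel_prod\<close> needs second countable types; here compactness replaces it: an open
  set is a countable union of compact sets, each covered by finitely many open boxes inside it.
\<close>

lemma open_in_sets_pair_borel:
  fixes W :: "('a::metric_space \<times> 'b::metric_space) set"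
  assumes "compact (UNIV :: 'a set)" "compact (UNIV :: 'b set)" "open W"
  shows "W \<in> sets (borel \<Otimes>\<^sub>M borel)"
proof -
  define boxes where "boxes = {A \<times> B | A B. open A \<and> open B \<and> A \<times> B \<subseteq> W}"
  have "boxes \<subseteq> sets (borel \<Otimes>\<^sub>M borel)"
    unfolding boxes_def by (auto intro: pair_measureI)
  have "W \<subseteq> \<Union>boxes"
  proof
    fix z assume "z \<in> W"
    then obtain A B where "open A" "open B" "z \<in> A \<times> B" "A \<times> B \<subseteq> W"
      by (rule open_prod_elim[OF assms(3)])
    then show "z \<in> \<Union>boxes" unfolding boxes_def by blast
  qed
  then have finite_cover: "\<exists>T. T \<subseteq> boxes \<and> finite T \<and> K \<subseteq> \<Union>T" if "compact K" "K \<subseteq> W" for K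
    using that by (elim compactE[of K boxes]) (auto simp: boxes_def intro: open_Times)
  have "compact (UNIV :: ('a \<times> 'b) set)"
    using compact_Times[OF assms(1,2)] by simp
  then obtain K :: "nat \<Rightarrow> ('a \<times> 'b) set"
    where K: "\<And>n. compact (K n)" "\<And>n. K n \<subseteq> W" "W = (\<Union>n. K n)"
    using compact_space_open_Union_compact_subsets assms(3) by blast
  then have "\<forall>n. \<exists>T. T \<subseteq> boxes \<and> finite T \<and> K n \<subseteq> \<Union>T"
    using finite_cover by blast
  then obtain T where T: "\<And>n. T n \<subseteq> boxes \<and> finite (T n) \<and> K n \<subseteq> \<Union>(T n)"
    by (metis choice)
  have "W = (\<Union>n. \<Union>(T n))"
    using T K(2,3) unfolding boxes_def by blast
  moreover have "\<Union>(T n) \<in> sets (borel \<Otimes>\<^sub>M borel)" for n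
    using T \<open>boxes \<subseteq> sets (borel \<Otimes>\<^sub>M borel)\<close> by (intro sets.finite_Union) auto
  ultimately show ?thesis
    by (auto intro: sets.countable_nat_UN)
qed

lemma sets_pair_borel_compact:
  assumes "compact (UNIV :: 'a::metric_space set)" "compact (UNIV :: 'b::metric_space set)"
  shows "sets (borel \<Otimes>\<^sub>M borel) = sets (borel :: ('a \<times> 'b) measure)"
proof
  have "(\<lambda>z. (fst z, snd z)) \<in> (borel :: ('a \<times> 'b) measure) \<rightarrow>\<^sub>M borel \<Otimes>\<^sub>M borel"
    by (intro measurable_Pair borel_measurable_continuous_onI continuous_intros)
  from measurable_sets[OF this] show "sets (borel \<Otimes>\<^sub>M borel) \<subseteq> sets (borel :: ('a \<times> 'b) measure)"
    by auto
  have "(\<lambda>z. z) \<in> borel_measurable (borel \<Otimes>\<^sub>M borel :: ('a \<times> 'b) measure)"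
    by (rule borel_measurableI) (simp add: space_pair_measure open_in_sets_pair_borel[OF assms])
  from measurable_sets[OF this] show "sets (borel :: ('a \<times> 'b) measure) \<subseteq> sets (borel \<Otimes>\<^sub>M borel)"
    by (auto simp: space_pair_measure)
qed

section \<open>Bounded Lipschitz and bounded Borel functions\<close>

definition bounded_lipschitz :: "('c::metric_space \<Rightarrow> real) \<Rightarrow> bool" where
  "bounded_lipschitz f \<longleftrightarrow> (\<exists>L. L-lipschitz_on UNIV f) \<and> (\<exists>B. \<forall>z. \<bar>f z\<bar> \<le> B)"

definition bounded_borel :: "('c::topological_space \<Rightarrow> real) \<Rightarrow> bool" where
  "bounded_borel g \<longleftrightarrow> g \<in> borel_measurable borel \<and> (\<exists>B. \<forall>z. \<bar>g z\<bar> \<le> B)"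

lemma bounded_lipschitzI: "L-lipschitz_on UNIV f \<Longrightarrow> (\<And>z. \<bar>f z\<bar> \<le> B) \<Longrightarrow> bounded_lipschitz f"
  unfolding bounded_lipschitz_def by blast

lemma abs_lincomb_le:
  fixes f g :: "'c \<Rightarrow> real"
  shows "\<bar>f z\<bar> \<le> B \<Longrightarrow> \<bar>g z\<bar> \<le> B' \<Longrightarrow> \<bar>a * f z + g z\<bar> \<le> \<bar>a\<bar> * B + B'"
  using mult_left_mono[of "\<bar>f z\<bar>" B "\<bar>a\<bar>"] abs_triangle_ineq[of "a * f z" "g z"]
  by (simp add: abs_mult)

lemma bounded_lipschitz_lincomb:
  assumes "bounded_lipschitz f" "bounded_lipschitz g"
  shows "bounded_lipschitz (\<lambda>z. a * f z + g z)"
proof -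
  obtain L B L' B' where "L-lipschitz_on UNIV f" "\<And>z. \<bar>f z\<bar> \<le> B"
    "L'-lipschitz_on UNIV g" "\<And>z. \<bar>g z\<bar> \<le> B'"
    using assms unfolding bounded_lipschitz_def by auto
  then show ?thesis
    by (intro bounded_lipschitzI[where L="\<bar>a\<bar> * L + L'" and B="\<bar>a\<bar> * B + B'"]
        lipschitz_on_add lipschitz_on_cmult_real abs_lincomb_le)
qed

lemma bounded_lipschitz_imp_bounded_borel: "bounded_lipschitz f \<Longrightarrow> bounded_borel f"
  unfolding bounded_lipschitz_def bounded_borel_def
  by (auto intro: borel_measurable_continuous_onI lipschitz_on_continuous_on)

lemma bounded_borel_const: "bounded_borel (\<lambda>z. c)"
  unfolding bounded_borel_def by auto

lemma bounded_borel_indicator: "A \<in> sets borel \<Longrightarrow> bounded_borel (indicator A)"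
  unfolding bounded_borel_def by (auto intro!: exI[of _ 1] simp: indicator_def)

lemma bounded_borel_lincomb:
  assumes "bounded_borel f" "bounded_borel g"
  shows "bounded_borel (\<lambda>z. a * f z + g z)"
proof -
  obtain B B' where "\<And>z. \<bar>f z\<bar> \<le> B" "\<And>z. \<bar>g z\<bar> \<le> B'"
    using assms unfolding bounded_borel_def by auto
  then have "\<forall>z. \<bar>a * f z + g z\<bar> \<le> \<bar>a\<bar> * B + B'"
    by (blast intro: abs_lincomb_le)
  with assms show ?thesis
    unfolding bounded_borel_def by auto
qed

lemma bounded_borel_add: "bounded_borel f \<Longrightarrow> bounded_borel g \<Longrightarrow> bounded_borel (\<lambda>z. f z + g z)"
  using bounded_borel_lincomb[of f g 1] by simp

lemma bounded_borel_cmult: "bounded_borel f \<Longrightarrow> bounded_borel (\<lambda>z. a * f z)"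
  using bounded_borel_lincomb[OF _ bounded_borel_const, of f a 0] by simp

lemma bounded_borel_diff: "bounded_borel f \<Longrightarrow> bounded_borel g \<Longrightarrow> bounded_borel (\<lambda>z. f z - g z)"
  using bounded_borel_lincomb[of g f "-1"] by simp

lemma bounded_borel_abs: "bounded_borel f \<Longrightarrow> bounded_borel (\<lambda>z. \<bar>f z\<bar>)"
  unfolding bounded_borel_def by auto

lemma bounded_borel_exp: "bounded_borel f \<Longrightarrow> bounded_borel (\<lambda>z. exp (f z))"
  unfolding bounded_borel_def by (auto intro!: exI[of _ "exp _"] dest: spec abs_le_D1)

lemma bounded_borel_integrable:
  assumes "finite_measure M" "sets M = sets borel" "bounded_borel g"
  shows "integrable M g"
proof -
  interpret finite_measure M by fact
  obtain B where "\<And>z. \<bar>g z\<bar> \<le> B" "g \<in> borel_measurable M"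
    using assms(2,3) measurable_cong_sets[OF assms(2) refl] unfolding bounded_borel_def by auto
  then show ?thesis by (intro integrable_const_bound[where B=B]) auto
qed

lemma integral_abs_le_lincomb:
  assumes "finite_measure M" "sets M = sets borel"
    and "bounded_borel u" "bounded_borel v" "bounded_borel w"
    and "\<And>z. \<bar>u z\<bar> \<le> a * \<bar>v z\<bar> + \<bar>w z\<bar>"
  shows "(\<integral>z. \<bar>u z\<bar> \<partial>M) \<le> a * (\<integral>z. \<bar>v z\<bar> \<partial>M) + (\<integral>z. \<bar>w z\<bar> \<partial>M)"
proof -
  have int: "integrable M (\<lambda>z. \<bar>f z\<bar>)" if "bounded_borel f" for f
    using assms(1,2) bounded_borel_abs[OF that] by (rule bounded_borel_integrable)
  have "(\<integral>z. \<bar>u z\<bar> \<partial>M) \<le> (\<integral>z. a * \<bar>v z\<bar> + \<bar>w z\<bar> \<partial>M)"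
    using assms(3-6) int by (intro integral_mono) auto
  also have "\<dots> = a * (\<integral>z. \<bar>v z\<bar> \<partial>M) + (\<integral>z. \<bar>w z\<bar> \<partial>M)"
    using assms(4,5) int by simp
  finally show ?thesis .
qed

definition clip :: "real \<Rightarrow> real \<Rightarrow> real" where
  "clip M t = max (- M) (min M t)"

lemma lipschitz_on_clip: "1-lipschitz_on UNIV (clip M)"
  by (rule lipschitz_onI) (auto simp: clip_def dist_real_def)

lemma abs_clip_le: "0 \<le> M \<Longrightarrow> \<bar>clip M t\<bar> \<le> M"
  by (auto simp: clip_def)

lemma abs_clip_diff_le: "\<bar>s\<bar> \<le> M \<Longrightarrow> \<bar>clip M t - s\<bar> \<le> \<bar>t - s\<bar>"
  by (auto simp: clip_def)

lemma bounded_borel_clip: "f \<in> borel_measurable borel \<Longrightarrow> bounded_borel (\<lambda>z. clip B (f z))"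
  unfolding bounded_borel_def clip_def by (intro conjI exI[of _ "\<bar>B\<bar>"]) auto

lemma lipschitz_on_compact_space_bounded:
  fixes f :: "'c::metric_space \<Rightarrow> real"
  assumes "compact (UNIV :: 'c set)" "L-lipschitz_on UNIV f"
  shows "bounded_lipschitz f"
proof -
  have "compact (range f)"
    using compact_continuous_image[OF lipschitz_on_continuous_on[OF assms(2)] assms(1)] .
  then obtain B where "\<And>z. \<bar>f z\<bar> \<le> B"
    unfolding bounded_iff[symmetric] by (metis compact_imp_bounded bounded_real rangeI)
  with assms(2) show ?thesis by (rule bounded_lipschitzI)
qed

lemma lipschitz_on_min_one_mult_infdist:
  fixes C :: "'c::metric_space set"
  shows "(real k)-lipschitz_on UNIV (\<lambda>z. min 1 (real k * infdist z C))"
proof (rule lipschitz_onI)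
  fix x y :: 'c
  have "dist (min 1 (real k * infdist x C)) (min 1 (real k * infdist y C))
      \<le> \<bar>real k * infdist x C - real k * infdist y C\<bar>"
    unfolding dist_real_def by linarith
  also have "\<dots> = real k * \<bar>infdist x C - infdist y C\<bar>"
    by (simp add: abs_mult right_diff_distrib[symmetric])
  also have "\<dots> \<le> real k * dist x y"
    by (intro mult_left_mono infdist_triangle_abs) auto
  finally show "dist (min 1 (real k * infdist x C)) (min 1 (real k * infdist y C)) \<le> real k * dist x y" .
qed simp

lemma tendsto_min_one_mult_infdist:
  fixes C :: "'c::metric_space set"
  assumes "closed C" "C \<noteq> {}"
  shows "(\<lambda>k. min 1 (real k * infdist z C)) \<longlonglongrightarrow> indicator (- C) z"
proof (cases "z \<in> C")
  case False
  then have "0 < infdist z C"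
    using assms in_closed_iff_infdist_zero[of C z] infdist_nonneg[of z C] by auto
  moreover have "\<forall>\<^sub>F k in sequentially. 1 / infdist z C \<le> real k"
    using filterlim_real_sequentially unfolding filterlim_at_top by blast
  ultimately have "\<forall>\<^sub>F k in sequentially. 1 \<le> real k * infdist z C"
    by (auto elim: eventually_mono simp: divide_le_eq)
  then have "\<forall>\<^sub>F k in sequentially. min 1 (real k * infdist z C) = indicator (- C) z"
    by eventually_elim (use False in simp)
  then show ?thesis by (rule tendsto_eventually)
qed simp

section \<open>Simultaneous \<open>L^1\<close>-approximation by Lipschitz functions\<close>

definition lipschitz_approximable :: "'c::metric_space measure \<Rightarrow> 'c measure \<Rightarrow> ('c \<Rightarrow> real) \<Rightarrow> bool" where
  "lipschitz_approximable M1 M2 g \<longleftrightarrow> (\<forall>e>0. \<exists>f. bounded_lipschitz f \<and>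
      (\<integral>z. \<bar>f z - g z\<bar> \<partial>M1) < e \<and> (\<integral>z. \<bar>f z - g z\<bar> \<partial>M2) < e)"

locale two_finite_borel_measures =
  fixes M1 M2 :: "'c::metric_space measure"
  assumes finite_M1: "finite_measure M1" and finite_M2: "finite_measure M2"
    and sets_M1: "sets M1 = sets borel" and sets_M2: "sets M2 = sets borel"
begin

abbreviation approximable :: "('c \<Rightarrow> real) \<Rightarrow> bool" where
  "approximable \<equiv> lipschitz_approximable M1 M2"

lemma approximable_bounded_lipschitz: "bounded_lipschitz f \<Longrightarrow> approximable f"
  unfolding lipschitz_approximable_def by (intro allI impI exI[of _ f]) auto

lemma approximable_const: "approximable (\<lambda>z. c)"
  by (rule approximable_bounded_lipschitz) (auto simp: bounded_lipschitz_def intro: lipschitz_on_constant)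

lemma approximable_lincomb:
  assumes "approximable f" "approximable g" "bounded_borel f" "bounded_borel g"
  shows "approximable (\<lambda>z. a * f z + g z)"
  unfolding lipschitz_approximable_def
proof (intro allI impI)
  fix e :: real assume "e > 0"
  define d where "d = e / (2 * (\<bar>a\<bar> + 1))"
  have "d > 0" using \<open>e > 0\<close> unfolding d_def by (simp add: add_pos_nonneg)
  then obtain f' where f': "bounded_lipschitz f'" "(\<integral>z. \<bar>f' z - f z\<bar> \<partial>M1) < d" "(\<integral>z. \<bar>f' z - f z\<bar> \<partial>M2) < d"
    using assms(1) unfolding lipschitz_approximable_def by blast
  obtain g' where g': "bounded_lipschitz g'" "(\<integral>z. \<bar>g' z - g z\<bar> \<partial>M1) < e / 2" "(\<integral>z. \<bar>g' z - g z\<bar> \<partial>M2) < e / 2"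
    using assms(2) \<open>e > 0\<close> unfolding lipschitz_approximable_def by (meson half_gt_zero)
  have "\<bar>a\<bar> * d < e / 2"
    using \<open>e > 0\<close> unfolding d_def by (simp add: field_simps)
  have error: "(\<integral>z. \<bar>(a * f' z + g' z) - (a * f z + g z)\<bar> \<partial>M) < e"
    if "finite_measure M" "sets M = sets borel"
      and "(\<integral>z. \<bar>f' z - f z\<bar> \<partial>M) < d" "(\<integral>z. \<bar>g' z - g z\<bar> \<partial>M) < e / 2" for M
  proof -
    have "(\<integral>z. \<bar>(a * f' z + g' z) - (a * f z + g z)\<bar> \<partial>M)
        \<le> \<bar>a\<bar> * (\<integral>z. \<bar>f' z - f z\<bar> \<partial>M) + (\<integral>z. \<bar>g' z - g z\<bar> \<partial>M)"
      using that(1,2) assms(3,4) f'(1) g'(1)[THEN bounded_lipschitz_imp_bounded_borel]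
        f'(1)[THEN bounded_lipschitz_imp_bounded_borel]
      by (intro integral_abs_le_lincomb bounded_borel_diff bounded_borel_lincomb)
        (auto simp: algebra_simps abs_mult[symmetric] intro: abs_triangle_ineq[THEN order_trans])
    also have "\<dots> < e"
      using that(3,4) \<open>\<bar>a\<bar> * d < e / 2\<close> mult_left_mono[OF less_imp_le[OF that(3)], of "\<bar>a\<bar>"] by simp
    finally show ?thesis .
  qed
  show "\<exists>h. bounded_lipschitz h \<and> (\<integral>z. \<bar>h z - (a * f z + g z)\<bar> \<partial>M1) < e \<and>
      (\<integral>z. \<bar>h z - (a * f z + g z)\<bar> \<partial>M2) < e"
    using bounded_lipschitz_lincomb[OF f'(1) g'(1)] error[OF finite_M1 sets_M1 f'(2) g'(2)]
      error[OF finite_M2 sets_M2 f'(3) g'(3)] by blast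
qed

lemma approximable_cmult:
  assumes "approximable f" "bounded_borel f"
  shows "approximable (\<lambda>z. a * f z)"
  using approximable_lincomb[OF assms(1) approximable_const assms(2) bounded_borel_const, of a 0] by simp

lemma approximable_sum:
  assumes "finite S" "\<And>i. i \<in> S \<Longrightarrow> approximable (f i) \<and> bounded_borel (f i)"
  shows "approximable (\<lambda>z. \<Sum>i\<in>S. f i z) \<and> bounded_borel (\<lambda>z. \<Sum>i\<in>S. f i z)"
  using assms
proof (induction S rule: finite_induct)
  case empty
  then show ?case using approximable_const bounded_borel_const by simp
next
  case (insert i S)
  then show ?case
    using approximable_lincomb[of "f i" "\<lambda>z. \<Sum>i\<in>S. f i z" 1]
      bounded_borel_add[of "f i" "\<lambda>z. \<Sum>i\<in>S. f i z"] by simp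
qed

lemma integral_abs_diff_tendsto_zero:
  assumes "finite_measure M" "sets M = sets borel" "bounded_borel g" "\<And>k. bounded_borel (h k)"
    and "\<And>z. (\<lambda>k. h k z) \<longlonglongrightarrow> g z" "\<And>k z. \<bar>h k z\<bar> \<le> B"
  shows "(\<lambda>k. \<integral>z. \<bar>h k z - g z\<bar> \<partial>M) \<longlonglongrightarrow> 0"
proof -
  interpret finite_measure M by fact
  obtain C where C: "\<And>z. \<bar>g z\<bar> \<le> C" using assms(3) unfolding bounded_borel_def by auto
  have "(\<lambda>k. \<integral>z. \<bar>h k z - g z\<bar> \<partial>M) \<longlonglongrightarrow> (\<integral>z. 0 \<partial>M)"
  proof (rule integral_dominated_convergence[where w="\<lambda>z. B + C"])
    show "(\<lambda>z. \<bar>h k z - g z\<bar>) \<in> borel_measurable M" for k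
      using bounded_borel_abs[OF bounded_borel_diff[OF assms(4) assms(3)]] measurable_cong_sets[OF assms(2) refl]
      unfolding bounded_borel_def by auto
    show "AE z in M. (\<lambda>k. \<bar>h k z - g z\<bar>) \<longlonglongrightarrow> 0"
      using assms(5) by (intro AE_I2) (metis LIM_zero tendsto_rabs_zero)
    show "AE z in M. norm \<bar>h k z - g z\<bar> \<le> B + C" for k
      using assms(6) C by (intro AE_I2) (smt (verit) real_norm_def)
  qed auto
  then show ?thesis by simp
qed

lemma approximable_limit:
  assumes "bounded_borel g" "\<And>k. bounded_borel (h k)" "\<And>k. approximable (h k)"
    and "\<And>z. (\<lambda>k. h k z) \<longlonglongrightarrow> g z" "\<And>k z. \<bar>h k z\<bar> \<le> B"
  shows "approximable g"
  unfolding lipschitz_approximable_def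
proof (intro allI impI)
  fix e :: real assume "e > 0"
  have "\<forall>\<^sub>F k in sequentially. (\<integral>z. \<bar>h k z - g z\<bar> \<partial>M1) < e / 2 \<and> (\<integral>z. \<bar>h k z - g z\<bar> \<partial>M2) < e / 2"
    using \<open>e > 0\<close>
    by (intro eventually_conj order_tendstoD(2)[OF integral_abs_diff_tendsto_zero[where B=B]] assms
        finite_M1 sets_M1 finite_M2 sets_M2) auto
  then obtain k where k: "(\<integral>z. \<bar>h k z - g z\<bar> \<partial>M1) < e / 2" "(\<integral>z. \<bar>h k z - g z\<bar> \<partial>M2) < e / 2"
    by (auto simp: eventually_sequentially)
  obtain f where f: "bounded_lipschitz f" "(\<integral>z. \<bar>f z - h k z\<bar> \<partial>M1) < e / 2" "(\<integral>z. \<bar>f z - h k z\<bar> \<partial>M2) < e / 2"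
    using assms(3)[of k] \<open>e > 0\<close> unfolding lipschitz_approximable_def by (meson half_gt_zero)
  have tri: "\<bar>f z - g z\<bar> \<le> 1 * \<bar>f z - h k z\<bar> + \<bar>h k z - g z\<bar>" for z
    by simp
  have "(\<integral>z. \<bar>f z - g z\<bar> \<partial>M) < e" if "finite_measure M" "sets M = sets borel"
    and "(\<integral>z. \<bar>f z - h k z\<bar> \<partial>M) < e / 2" "(\<integral>z. \<bar>h k z - g z\<bar> \<partial>M) < e / 2" for M
    using integral_abs_le_lincomb[OF that(1,2) _ _ _ tri] that(3,4)
      bounded_lipschitz_imp_bounded_borel[OF f(1)] assms(1,2) bounded_borel_diff by fastforce
  then show "\<exists>f. bounded_lipschitz f \<and> (\<integral>z. \<bar>f z - g z\<bar> \<partial>M1) < e \<and> (\<integral>z. \<bar>f z - g z\<bar> \<partial>M2) < e"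
    using f k finite_M1 sets_M1 finite_M2 sets_M2 by blast
qed

lemma approximable_open_indicator:
  assumes "open U"
  shows "approximable (indicator U)"
proof (cases "U = UNIV")
  case True
  then show ?thesis using approximable_const[of 1] by simp
next
  case False
  define h where "h k z = min 1 (real k * infdist z (- U))" for k z
  have bound: "\<bar>h k z\<bar> \<le> 1" for k z
    unfolding h_def using infdist_nonneg[of z "- U"] by auto
  have lip: "bounded_lipschitz (h k)" for k
    unfolding h_def using lipschitz_on_min_one_mult_infdist bound[unfolded h_def] by (rule bounded_lipschitzI)
  have lim: "(\<lambda>k. h k z) \<longlonglongrightarrow> indicator U z" for z
    using tendsto_min_one_mult_infdist[of "- U" z] False assms by (auto simp: h_def)
  show ?thesis
  proof (rule approximable_limit[where h=h and B=1])
    show "bounded_borel (indicator U)" using assms by (intro bounded_borel_indicator) auto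
  qed (use bound lip lim in \<open>auto intro: bounded_lipschitz_imp_bounded_borel approximable_bounded_lipschitz\<close>)
qed

lemma approximable_indicator:
  assumes "A \<in> sets borel"
  shows "approximable (indicator A)"
proof -
  have "Int_stable {S :: 'c set. open S}" "{S :: 'c set. open S} \<subseteq> Pow UNIV"
    by (auto simp: Int_stable_def)
  moreover have "A \<in> sigma_sets UNIV {S :: 'c set. open S}"
    using assms sets_borel by metis
  ultimately show ?thesis
  proof (induction rule: sigma_sets_induct_disjoint)
    case (basic A)
    then show ?case using approximable_open_indicator by auto
  next
    case empty
    then show ?case using approximable_const[of 0] by simp
  next
    case (compl A)
    have "bounded_borel (indicator A :: 'c \<Rightarrow> real)"
      using compl(1) by (intro bounded_borel_indicator) (simp add: sets_borel)
    then have "approximable (\<lambda>z. (-1) * indicator A z + 1)"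
      by (intro approximable_lincomb compl(2) approximable_const bounded_borel_const)
    moreover have "(\<lambda>z. (-1) * indicator A z + 1) = (indicator (UNIV - A) :: 'c \<Rightarrow> real)"
      by (auto simp: indicator_def)
    ultimately show ?case by simp
  next
    case (union A)
    have borel_A: "bounded_borel (indicator (A i) :: 'c \<Rightarrow> real)" for i
      using union(2) by (intro bounded_borel_indicator) (auto simp: sets_borel)
    define S where "S n z = (\<Sum>i<n. indicator (A i) z :: real)" for n z
    have S: "approximable (S n) \<and> bounded_borel (S n)" for n
      unfolding S_def using union(3) borel_A by (intro approximable_sum) auto
    have S_eq: "S n z = indicator (\<Union>i<n. A i) z" for n z
      unfolding S_def using union(1)
      by (intro indicator_UN_disjoint[symmetric]) (auto simp: disjoint_family_on_def)
    show ?case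
    proof (rule approximable_limit[where h=S and B=1])
      show "bounded_borel (indicator (\<Union>i. A i))"
        using union(2) by (intro bounded_borel_indicator) (auto simp: sets_borel intro: sigma_sets.Union)
      show "(\<lambda>n. S n z) \<longlonglongrightarrow> indicator (\<Union>i. A i) z" for z
        unfolding S_eq by (rule LIMSEQ_indicator_UN)
      show "\<bar>S n z\<bar> \<le> 1" for n z
        unfolding S_eq by (simp add: indicator_def)
    qed (use S in auto)
  qed
qed

lemma sum_mult_indicator_level_set:
  "\<phi> z \<in> S \<Longrightarrow> finite S \<Longrightarrow> (\<Sum>k\<in>S. c k * indicator {z. \<phi> z = k} z) = (c (\<phi> z) :: real)"
  by (simp add: indicator_def if_distrib[of "\<lambda>t. _ * t"] sum.delta' cong: if_cong)

lemma approximable_bounded_borel: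
  assumes "bounded_borel g"
  shows "approximable g"
proof -
  obtain B where B: "\<And>z. \<bar>g z\<bar> \<le> B" and g_borel[measurable]: "g \<in> borel_measurable borel"
    using assms unfolding bounded_borel_def by auto
  define N where "N n = \<lceil>real (Suc n) * B\<rceil>" for n
  define h where "h n z = (\<Sum>k\<in>{-N n..N n}. real_of_int k / real (Suc n) *
      indicator {z. \<lfloor>real (Suc n) * g z\<rfloor> = k} z)" for n z
  have h_eq: "h n z = real_of_int \<lfloor>real (Suc n) * g z\<rfloor> / real (Suc n)" for n z
  proof -
    have "\<bar>real (Suc n) * g z\<bar> \<le> real (Suc n) * B"
      using B[of z] by (simp add: abs_mult mult_left_mono)
    then have "\<lfloor>real (Suc n) * g z\<rfloor> \<le> \<lfloor>real (Suc n) * B\<rfloor>"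
      "\<lfloor>- (real (Suc n) * B)\<rfloor> \<le> \<lfloor>real (Suc n) * g z\<rfloor>"
      by (auto intro: floor_mono simp: abs_le_iff)
    then have "\<lfloor>real (Suc n) * g z\<rfloor> \<in> {-N n..N n}"
      unfolding N_def using floor_le_ceiling[of "real (Suc n) * B"] by (simp add: ceiling_def)
    then show ?thesis
      unfolding h_def by (rule sum_mult_indicator_level_set) simp
  qed
  have h_approx: "approximable (h n) \<and> bounded_borel (h n)" for n
    unfolding h_def
  proof (intro approximable_sum ballI conjI)
    fix k
    have level: "{z. \<lfloor>real (Suc n) * g z\<rfloor> = k} \<in> sets borel" by measurable
    show "approximable (\<lambda>z. real_of_int k / real (Suc n) * indicator {z. \<lfloor>real (Suc n) * g z\<rfloor> = k} z)"
      "bounded_borel (\<lambda>z. real_of_int k / real (Suc n) * indicator {z. \<lfloor>real (Suc n) * g z\<rfloor> = k} z)"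
      using level by (blast intro: approximable_cmult approximable_indicator
          bounded_borel_indicator bounded_borel_cmult)+
  qed simp
  have h_error: "\<bar>h n z - g z\<bar> \<le> 1 / real (Suc n)" for n z
  proof -
    have "h n z - g z = (real_of_int \<lfloor>real (Suc n) * g z\<rfloor> - real (Suc n) * g z) / real (Suc n)"
      unfolding h_eq by (simp add: field_simps)
    moreover have "\<bar>real_of_int \<lfloor>real (Suc n) * g z\<rfloor> - real (Suc n) * g z\<bar> \<le> 1"
      by linarith
    ultimately show ?thesis
      by (metis abs_divide abs_of_nat divide_right_mono of_nat_0_le_iff)
  qed
  show ?thesis
  proof (rule approximable_limit[where h=h and B="B + 1"])
    show "(\<lambda>n. h n z) \<longlonglongrightarrow> g z" for z
    proof -
      have "(\<lambda>n. 1 / real (Suc n)) \<longlonglongrightarrow> 0"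
        by (rule LIMSEQ_inverse_real_of_nat[unfolded inverse_eq_divide])
      then have "(\<lambda>n. h n z - g z) \<longlonglongrightarrow> 0"
        by (rule Lim_null_comparison[rotated]) (use h_error in \<open>auto intro!: always_eventually\<close>)
      then show ?thesis by (simp add: LIM_zero_iff)
    qed
    show "\<bar>h n z\<bar> \<le> B + 1" for n z
    proof -
      have "1 / real (Suc n) \<le> 1" by simp
      then show ?thesis using h_error[of n z] B[of z] by linarith
    qed
    show "bounded_borel g" by (rule assms)
  qed (use h_approx in blast)+
qed

lemma bounded_lipschitz_approx_within_bound:
  assumes "bounded_borel g" "\<And>z. \<bar>g z\<bar> \<le> M" "e > 0"
  obtains f L where "L-lipschitz_on UNIV f" "\<And>z. \<bar>f z\<bar> \<le> M"
    "(\<integral>z. \<bar>f z - g z\<bar> \<partial>M1) < e" "(\<integral>z. \<bar>f z - g z\<bar> \<partial>M2) < e"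
proof -
  obtain f0 where f0: "bounded_lipschitz f0" "(\<integral>z. \<bar>f0 z - g z\<bar> \<partial>M1) < e" "(\<integral>z. \<bar>f0 z - g z\<bar> \<partial>M2) < e"
    using approximable_bounded_borel[OF assms(1)] assms(3) unfolding lipschitz_approximable_def by blast
  then obtain L where L: "L-lipschitz_on UNIV f0"
    unfolding bounded_lipschitz_def by blast
  define f where "f z = clip M (f0 z)" for z
  have lip: "(1 * L)-lipschitz_on UNIV f"
    unfolding f_def using lipschitz_on_compose[OF L lipschitz_on_subset[OF lipschitz_on_clip]]
    by (simp add: comp_def)
  moreover have bound: "\<bar>f z\<bar> \<le> M" for z
    unfolding f_def using assms(2)[of z] by (intro abs_clip_le) linarith
  ultimately have "bounded_lipschitz f"
    unfolding bounded_lipschitz_def by blast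
  have "(\<integral>z. \<bar>f z - g z\<bar> \<partial>N) \<le> (\<integral>z. \<bar>f0 z - g z\<bar> \<partial>N)"
    if "finite_measure N" "sets N = sets borel" for N
  proof (rule integral_mono)
    have "integrable N (\<lambda>z. \<bar>h z - g z\<bar>)" if "bounded_lipschitz h" for h
      using \<open>finite_measure N\<close> \<open>sets N = sets borel\<close> bounded_lipschitz_imp_bounded_borel[OF that] assms(1)
      by (intro bounded_borel_integrable bounded_borel_abs bounded_borel_diff)
    then show "integrable N (\<lambda>z. \<bar>f z - g z\<bar>)" "integrable N (\<lambda>z. \<bar>f0 z - g z\<bar>)"
      using \<open>bounded_lipschitz f\<close> f0(1) by blast+
    show "\<bar>f z - g z\<bar> \<le> \<bar>f0 z - g z\<bar>" for z
      unfolding f_def by (rule abs_clip_diff_le[OF assms(2)])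
  qed
  then show ?thesis
    using that[OF lip bound] f0 finite_M1 sets_M1 finite_M2 sets_M2 by (meson le_less_trans)
qed

end

section \<open>Extended integrals\<close>

lemma enn2ereal_eq_ereal_enn2real: "x < \<infinity> \<Longrightarrow> enn2ereal x = ereal (enn2real x)"
  by (metis enn2ereal_ennreal ennreal_enn2real enn2real_nonneg infinity_ennreal_def)

lemma ext_integral_integrable:
  assumes "integrable M f"
  shows "ext_integral M f = ereal (integral\<^sup>L M f)"
proof -
  have "(\<integral>\<^sup>+ x. ennreal (f x) \<partial>M) < \<infinity>" "(\<integral>\<^sup>+ x. ennreal (- f x) \<partial>M) < \<infinity>"
    using assms unfolding real_integrable_def by (auto simp: top.not_eq_extremum)
  then show ?thesis
    unfolding ext_integral_def real_lebesgue_integral_def[OF assms]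
    by (simp add: enn2ereal_eq_ereal_enn2real)
qed

lemma integrable_imp_wd_functions: "integrable M f \<Longrightarrow> f \<in> wd_functions M"
  unfolding wd_functions_def real_integrable_def by auto

lemma tendsto_nn_integral_clip:
  assumes "c \<in> borel_measurable M"
  shows "(\<lambda>n. \<integral>\<^sup>+ z. ennreal (clip (real n) (c z)) \<partial>M) \<longlonglongrightarrow> (\<integral>\<^sup>+ z. ennreal (c z) \<partial>M)"
proof (rule nn_integral_LIMSEQ)
  have "ennreal (max 0 (clip (real m) t)) \<le> ennreal (max 0 (clip (real n) t))" if "m \<le> n" for m n t
    using that unfolding clip_def by (intro ennreal_leI) linarith
  then show "incseq (\<lambda>n z. ennreal (clip (real n) (c z)))"
    by (simp add: incseq_def le_fun_def)
  show "(\<lambda>n. ennreal (clip (real n) (c z))) \<longlonglongrightarrow> ennreal (c z)" for z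
  proof -
    obtain n0 :: nat where "\<bar>c z\<bar> \<le> real n0" using real_arch_simple by blast
    then have "\<forall>\<^sub>F n in sequentially. ennreal (clip (real n) (c z)) = ennreal (c z)"
      unfolding eventually_sequentially clip_def by (intro exI[of _ n0] allI impI) auto
    then show ?thesis
      by (rule tendsto_eventually)
  qed
  show "(\<lambda>z. ennreal (clip (real n) (c z))) \<in> borel_measurable M" for n
    using assms unfolding clip_def by measurable
qed

lemma ext_integral_le_of_clip:
  assumes "finite_measure M" and c_borel[measurable]: "c \<in> borel_measurable M"
    and neg_finite: "(\<integral>\<^sup>+ z. ennreal (- c z) \<partial>M) < \<infinity>"
    and clip_le: "\<And>n. (\<integral>z. clip (real n) (c z) \<partial>M) \<le> b n" and b: "b \<longlonglongrightarrow> b0"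
  shows "ext_integral M c \<le> ereal b0"
proof -
  interpret finite_measure M by fact
  define N where "N = enn2real (\<integral>\<^sup>+ z. ennreal (- c z) \<partial>M)"
  define p where "p n z = max 0 (clip (real n) (c z))" for n z
  have N: "(\<integral>\<^sup>+ z. ennreal (max 0 (- c z)) \<partial>M) = ennreal N"
    unfolding N_def ennreal_max_0 using neg_finite by simp
  then have neg_integrable: "integrable M (\<lambda>z. max 0 (- c z))"
    by (intro integrableI_nn_integral_finite) auto
  have "(\<integral>z. max 0 (- c z) \<partial>M) = N"
    using N by (subst integral_eq_nn_integral) (auto simp: N_def)
  have bounded_integrable: "integrable M f"
    if "f \<in> borel_measurable M" "\<And>z. \<bar>f z\<bar> \<le> B" for f :: "_ \<Rightarrow> real" and B
    using that by (intro integrable_const_bound[where B=B]) auto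
  have clip_borel[measurable]: "(\<lambda>z. clip (real n) (c z)) \<in> borel_measurable M" for n
    unfolding clip_def by measurable
  have clip_integrable: "integrable M (\<lambda>z. clip (real n) (c z))" for n
    by (rule bounded_integrable[where B="real n"]) (auto simp: clip_def)
  have p_integrable: "integrable M (p n)" for n
    unfolding p_def by (rule bounded_integrable[where B="real n"]) (auto simp: clip_def)
  have p_le: "(\<integral>z. p n z \<partial>M) \<le> b n + N" for n
  proof -
    have "(\<integral>z. p n z \<partial>M) \<le> (\<integral>z. clip (real n) (c z) + max 0 (- c z) \<partial>M)"
      using p_integrable clip_integrable neg_integrable
      by (intro integral_mono) (auto simp: p_def clip_def)
    also have "\<dots> \<le> b n + N"
      using clip_le[of n] clip_integrable neg_integrable \<open>(\<integral>z. max 0 (- c z) \<partial>M) = N\<close> by simp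
    finally show ?thesis .
  qed
  have p_nn_integral: "(\<integral>\<^sup>+ z. ennreal (clip (real n) (c z)) \<partial>M) = ennreal (\<integral>z. p n z \<partial>M)" for n
  proof -
    have "(\<integral>\<^sup>+ z. ennreal (p n z) \<partial>M) = ennreal (\<integral>z. p n z \<partial>M)"
      by (intro nn_integral_eq_integral p_integrable) (auto simp: p_def)
    then show ?thesis by (simp add: p_def ennreal_max_0)
  qed
  have "(\<lambda>n. \<integral>\<^sup>+ z. ennreal (clip (real n) (c z)) \<partial>M) \<longlonglongrightarrow> (\<integral>\<^sup>+ z. ennreal (c z) \<partial>M)"
    by (rule tendsto_nn_integral_clip) measurable
  moreover have "(\<lambda>n. ennreal (b n + N)) \<longlonglongrightarrow> ennreal (b0 + N)"
    using b by (intro tendsto_intros)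
  ultimately have "(\<integral>\<^sup>+ z. ennreal (c z) \<partial>M) \<le> ennreal (b0 + N)"
    using p_le by (intro LIMSEQ_le) (auto simp: p_nn_integral intro: ennreal_leI)
  moreover have "0 \<le> b0 + N"
  proof (rule LIMSEQ_le_const[OF tendsto_add[OF b tendsto_const]], intro exI allI impI)
    fix n
    have "0 \<le> (\<integral>z. p n z \<partial>M)" by (simp add: p_def)
    then show "0 \<le> b n + N" using p_le[of n] by linarith
  qed
  ultimately have "enn2ereal (\<integral>\<^sup>+ z. ennreal (c z) \<partial>M) \<le> ereal (b0 + N)"
    by (simp add: less_eq_ennreal.rep_eq)
  moreover have "enn2ereal (\<integral>\<^sup>+ z. ennreal (- c z) \<partial>M) = ereal N"
    unfolding N_def using neg_finite by (rule enn2ereal_eq_ereal_enn2real)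
  ultimately show ?thesis
    unfolding ext_integral_def by (cases "enn2ereal (\<integral>\<^sup>+ z. ennreal (c z) \<partial>M)") auto
qed

section \<open>The Lipschitz dual formula\<close>

lemma abs_exp_diff_le:
  fixes a b M :: real
  assumes "a \<le> M" "b \<le> M"
  shows "\<bar>exp a - exp b\<bar> \<le> exp M * \<bar>a - b\<bar>"
proof -
  have "exp u - exp v \<le> exp M * \<bar>u - v\<bar>" if "u \<le> M" for u v :: real
  proof -
    have "exp u * (1 + (v - u)) \<le> exp u * exp (v - u)"
      by (intro mult_left_mono exp_ge_add_one_self) auto
    then have "exp u - exp v \<le> exp u * (u - v)"
      by (simp add: algebra_simps exp_diff)
    also have "\<dots> \<le> exp u * \<bar>u - v\<bar>"
      by (intro mult_left_mono) auto
    also have "\<dots> \<le> exp M * \<bar>u - v\<bar>"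
      using that by (intro mult_right_mono) auto
    finally show ?thesis .
  qed
  from this[of a b] this[of b a] show ?thesis
    using assms by (simp add: abs_le_iff abs_minus_commute)
qed

lemma abs_ln_diff_le:
  fixes u v M :: real
  assumes "exp (- M) \<le> u" "exp (- M) \<le> v"
  shows "\<bar>ln u - ln v\<bar> \<le> exp M * \<bar>u - v\<bar>"
proof -
  have "ln v - ln u \<le> exp M * \<bar>u - v\<bar>" if "exp (- M) \<le> u" "exp (- M) \<le> v" for u v :: real
  proof -
    have pos: "0 < u" "0 < v" using that exp_gt_zero[of "- M"] by linarith+
    then have "ln v - ln u \<le> v / u - 1"
      using ln_le_minus_one[of "v / u"] by (simp add: ln_div)
    also have "\<dots> = (v - u) / u"
      using pos by (simp add: field_simps)
    also have "\<dots> \<le> \<bar>u - v\<bar> * (1 / u)"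
      using pos divide_right_mono[of "v - u" "\<bar>u - v\<bar>" u] by simp
    also have "\<dots> \<le> \<bar>u - v\<bar> * exp M"
      using pos that(1) by (intro mult_left_mono) (auto simp: exp_minus field_simps)
    finally show ?thesis by (simp add: mult.commute)
  qed
  from this[OF assms] this[OF assms(2,1)] show ?thesis
    by (simp add: abs_le_iff abs_minus_commute)
qed

lemma borel_measurable_section:
  fixes h :: "'a::topological_space \<times> 'b::topological_space \<Rightarrow> 'c::topological_space"
  assumes "h \<in> borel_measurable borel"
  shows "(\<lambda>x. h (x, y)) \<in> borel_measurable borel"
proof -
  have "(\<lambda>x. (x, y)) \<in> (borel :: 'a measure) \<rightarrow>\<^sub>M (borel :: ('a \<times> 'b) measure)"
    by (intro borel_measurable_continuous_onI continuous_intros)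
  with assms show ?thesis
    by (auto intro: measurable_compose[where g=h])
qed

lemma bounded_borel_section: "bounded_borel h \<Longrightarrow> bounded_borel (\<lambda>x. h (x, y))"
  unfolding bounded_borel_def by (auto intro: borel_measurable_section)

locale compact_coupling =
  fixes \<nu> :: "'a::metric_space measure" and \<pi> :: "('a \<times> 'b::metric_space) measure"
  assumes compact_A: "compact (UNIV :: 'a set)" and compact_B: "compact (UNIV :: 'b set)"
    and sets_\<nu>: "sets \<nu> = sets borel" and prob_\<nu>: "prob_space \<nu>"
    and sets_\<pi>: "sets \<pi> = sets borel" and prob_\<pi>: "prob_space \<pi>"
begin

definition normalized_lipschitz :: "('a \<times> 'b \<Rightarrow> real) set" where
  "normalized_lipschitz = {f. (\<exists>L. L-lipschitz_on UNIV f) \<and>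
      (\<forall>y. (\<integral>\<^sup>+ x. ennreal (exp (f (x, y))) \<partial>\<nu>) = 1)}"

definition normalized_wd_functions :: "('a \<times> 'b \<Rightarrow> real) set" where
  "normalized_wd_functions = {c \<in> wd_functions \<pi>. \<forall>y. (\<integral>\<^sup>+ x. ennreal (exp (c (x, y))) \<partial>\<nu>) = 1}"

definition sup_lipschitz :: ereal where
  "sup_lipschitz = (SUP f \<in> normalized_lipschitz. ereal (integral\<^sup>L \<pi> f))"

definition \<pi>Y :: "'b measure" where
  "\<pi>Y = distr \<pi> borel snd"

definition \<rho> :: "('a \<times> 'b) measure" where
  "\<rho> = \<nu> \<Otimes>\<^sub>M \<pi>Y"

lemma measurable_snd_\<pi>: "snd \<in> \<pi> \<rightarrow>\<^sub>M borel"
proof -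
  have "(\<lambda>z. snd z) \<in> borel_measurable (borel :: ('a \<times> 'b) measure)"
    by (intro borel_measurable_continuous_onI continuous_intros)
  then show ?thesis by (simp add: measurable_cong_sets[OF sets_\<pi> refl])
qed

lemma pair_prob_space_\<nu>_\<pi>Y: "pair_prob_space \<nu> \<pi>Y"
  using prob_\<nu> prob_space.prob_space_distr[OF prob_\<pi> measurable_snd_\<pi>]
  by (simp add: \<pi>Y_def pair_prob_space_def pair_sigma_finite_def prob_space_imp_sigma_finite)

lemma sets_\<rho>: "sets \<rho> = sets borel"
  unfolding \<rho>_def using sets_pair_measure_cong[OF sets_\<nu>, of \<pi>Y] sets_pair_borel_compact[OF compact_A compact_B]
  by (simp add: \<pi>Y_def)

sublocale approx: two_finite_borel_measures \<pi> \<rho>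
proof -
  interpret pair_prob_space \<nu> \<pi>Y by (rule pair_prob_space_\<nu>_\<pi>Y)
  show "two_finite_borel_measures \<pi> \<rho>"
    unfolding two_finite_borel_measures_def \<rho>_def using prob_\<pi> sets_\<pi> sets_\<rho>
    by (simp add: \<rho>_def P.finite_measure_axioms prob_space.finite_measure)
qed

lemma integrable_section:
  fixes h :: "'a \<times> 'b \<Rightarrow> real"
  shows "bounded_borel h \<Longrightarrow> integrable \<nu> (\<lambda>x. h (x, y))"
  using bounded_borel_section[of h y]
  by (intro bounded_borel_integrable[OF prob_space.finite_measure[OF prob_\<nu>] sets_\<nu>])

lemma integral_section_snd:
  fixes h :: "'a \<times> 'b \<Rightarrow> real"
  assumes "bounded_borel h"
  shows "integrable \<pi> (\<lambda>z. \<integral>x. h (x, snd z) \<partial>\<nu>)"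
    and "(\<integral>z. (\<integral>x. h (x, snd z) \<partial>\<nu>) \<partial>\<pi>) = (\<integral>z. h z \<partial>\<rho>)"
proof -
  interpret pair_prob_space \<nu> \<pi>Y by (rule pair_prob_space_\<nu>_\<pi>Y)
  define D where "D y = (\<integral>x. h (x, y) \<partial>\<nu>)" for y
  have h: "integrable (\<nu> \<Otimes>\<^sub>M \<pi>Y) (case_prod (\<lambda>x y. h (x, y)))"
    using bounded_borel_integrable[OF approx.finite_M2 sets_\<rho> assms] by (simp add: \<rho>_def)
  have D: "integrable \<pi>Y D" "(\<integral>y. D y \<partial>\<pi>Y) = (\<integral>z. h z \<partial>\<rho>)"
    unfolding D_def using integrable_snd[OF h] integral_snd[OF h] by (simp_all add: \<rho>_def)
  have D_borel: "D \<in> borel_measurable borel"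
    using borel_measurable_integrable[OF D(1)] by (simp add: \<pi>Y_def)
  show "integrable \<pi> (\<lambda>z. \<integral>x. h (x, snd z) \<partial>\<nu>)"
    using D(1) integrable_distr_eq[OF measurable_snd_\<pi> D_borel] by (simp add: \<pi>Y_def D_def)
  show "(\<integral>z. (\<integral>x. h (x, snd z) \<partial>\<nu>) \<partial>\<pi>) = (\<integral>z. h z \<partial>\<rho>)"
    using D(2) integral_distr[OF measurable_snd_\<pi> D_borel] by (simp add: \<pi>Y_def D_def[abs_def])
qed

definition normalizer :: "('a \<times> 'b \<Rightarrow> real) \<Rightarrow> 'b \<Rightarrow> real" where
  "normalizer f y = (\<integral>x. exp (f (x, y)) \<partial>\<nu>)"

lemma normalizer_bounds:
  assumes "bounded_borel f" "\<And>z. \<bar>f z\<bar> \<le> M"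
  shows "exp (- M) \<le> normalizer f y" "normalizer f y \<le> exp M"
proof -
  interpret prob_space \<nu> by (rule prob_\<nu>)
  have int: "integrable \<nu> (\<lambda>x. exp (f (x, y)))"
    using bounded_borel_exp[OF assms(1)] by (rule integrable_section)
  have "exp (- M) \<le> exp (f (x, y))" "exp (f (x, y)) \<le> exp M" for x
    using assms(2)[of "(x, y)"] by auto
  then show "exp (- M) \<le> normalizer f y" "normalizer f y \<le> exp M"
    unfolding normalizer_def using int by (auto intro: integral_ge_const integral_le_const)
qed

lemma normalizer_lipschitz:
  assumes "L-lipschitz_on UNIV f" "\<And>z. \<bar>f z\<bar> \<le> M"
  shows "(exp M * L)-lipschitz_on UNIV (normalizer f)"
proof (rule lipschitz_onI)
  interpret prob_space \<nu> by (rule prob_\<nu>)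
  fix y y' :: 'b
  have int: "integrable \<nu> (\<lambda>x. exp (f (x, y)))" for y
    by (intro integrable_section bounded_borel_exp bounded_lipschitz_imp_bounded_borel
        bounded_lipschitzI[OF assms])
  have "\<bar>exp (f (x, y)) - exp (f (x, y'))\<bar> \<le> exp M * L * dist y y'" for x
  proof -
    have "\<bar>exp (f (x, y)) - exp (f (x, y'))\<bar> \<le> exp M * \<bar>f (x, y) - f (x, y')\<bar>"
      using assms(2)[of "(x, y)"] assms(2)[of "(x, y')"] by (intro abs_exp_diff_le) auto
    also have "\<dots> \<le> exp M * (L * dist y y')"
      using lipschitz_onD[OF assms(1), of "(x, y)" "(x, y')"]
      by (intro mult_left_mono) (auto simp: dist_Pair_Pair dist_real_def)
    finally show ?thesis by simp
  qed
  then have "(\<integral>x. \<bar>exp (f (x, y)) - exp (f (x, y'))\<bar> \<partial>\<nu>) \<le> exp M * L * dist y y'"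
    using int by (intro integral_le_const) auto
  moreover have "normalizer f y - normalizer f y' = (\<integral>x. exp (f (x, y)) - exp (f (x, y')) \<partial>\<nu>)"
    unfolding normalizer_def using int[of y] int[of y'] by (rule Bochner_Integration.integral_diff[symmetric])
  then have "dist (normalizer f y) (normalizer f y') \<le> (\<integral>x. \<bar>exp (f (x, y)) - exp (f (x, y'))\<bar> \<partial>\<nu>)"
    unfolding dist_real_def by (metis integral_abs_bound real_norm_def)
  ultimately show "dist (normalizer f y) (normalizer f y') \<le> exp M * L * dist y y'"
    by linarith
next
  show "0 \<le> exp M * L" using lipschitz_on_nonneg[OF assms(1)] by simp
qed

lemma bounded_lipschitz_ln_normalizer:
  assumes lip: "L-lipschitz_on UNIV f" and bound: "\<And>z. \<bar>f z\<bar> \<le> M"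
  shows "bounded_lipschitz (\<lambda>z :: 'a \<times> 'b. ln (normalizer f (snd z)))"
proof (rule bounded_lipschitzI)
  note Z_bounds = normalizer_bounds[OF bounded_lipschitz_imp_bounded_borel[OF bounded_lipschitzI[OF lip bound]] bound]
  show "(exp M * (exp M * L))-lipschitz_on UNIV (\<lambda>z :: 'a \<times> 'b. ln (normalizer f (snd z)))"
  proof (rule lipschitz_onI)
    fix p q :: "'a \<times> 'b"
    have "dist (ln (normalizer f (snd p))) (ln (normalizer f (snd q)))
        \<le> exp M * \<bar>normalizer f (snd p) - normalizer f (snd q)\<bar>"
      unfolding dist_real_def using Z_bounds(1) by (intro abs_ln_diff_le)
    also have "\<dots> \<le> exp M * (exp M * L * dist (snd p) (snd q))"
      using lipschitz_onD[OF normalizer_lipschitz[OF lip bound]]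
      by (intro mult_left_mono) (auto simp: dist_real_def)
    also have "\<dots> \<le> exp M * (exp M * L * dist p q)"
      using lipschitz_on_nonneg[OF lip] dist_snd_le[of p q] by (intro mult_left_mono) auto
    finally show "dist (ln (normalizer f (snd p))) (ln (normalizer f (snd q))) \<le> exp M * (exp M * L) * dist p q"
      by (simp add: mult.assoc)
  qed (use lipschitz_on_nonneg[OF lip] in simp)
  show "\<bar>ln (normalizer f (snd z))\<bar> \<le> M" for z
    using Z_bounds[of "snd z"] ln_le_cancel_iff[of "exp (- M)" "normalizer f (snd z)"]
      ln_le_cancel_iff[of "normalizer f (snd z)" "exp M"] exp_gt_zero[of "- M"]
    by (auto simp: abs_le_iff)
qed

lemma normalize_in_normalized_lipschitz:
  assumes "bounded_lipschitz f"
  shows "(\<lambda>z. f z - ln (normalizer f (snd z))) \<in> normalized_lipschitz"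
proof -
  obtain L M where lip: "L-lipschitz_on UNIV f" and bound: "\<And>z. \<bar>f z\<bar> \<le> M"
    using assms unfolding bounded_lipschitz_def by blast
  have "bounded_borel f"
    using assms by (rule bounded_lipschitz_imp_bounded_borel)
  have Z_pos: "0 < normalizer f y" for y
    using normalizer_bounds(1)[OF \<open>bounded_borel f\<close> bound, of y] exp_gt_zero[of "- M"] by linarith
  have "bounded_lipschitz (\<lambda>z. (- 1) * ln (normalizer f (snd z)) + f z)"
    using bounded_lipschitz_ln_normalizer[OF lip bound] assms by (rule bounded_lipschitz_lincomb)
  moreover have "(\<integral>\<^sup>+ x. ennreal (exp (f (x, y) - ln (normalizer f y))) \<partial>\<nu>) = 1" for y
  proof -
    have "(\<integral>\<^sup>+ x. ennreal (exp (f (x, y) - ln (normalizer f y))) \<partial>\<nu>)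
        = (\<integral>\<^sup>+ x. ennreal (exp (f (x, y)) / normalizer f y) \<partial>\<nu>)"
      using Z_pos[of y] by (simp add: exp_diff)
    also have "\<dots> = ennreal (\<integral>x. exp (f (x, y)) / normalizer f y \<partial>\<nu>)"
      using integrable_section[OF bounded_borel_exp[OF \<open>bounded_borel f\<close>], of y] Z_pos[of y]
      by (intro nn_integral_eq_integral) auto
    also have "\<dots> = 1"
      using Z_pos[of y] by (simp add: normalizer_def)
    finally show ?thesis .
  qed
  ultimately show ?thesis
    unfolding normalized_lipschitz_def bounded_lipschitz_def by auto
qed

lemma ln_normalizer_le:
  assumes f: "bounded_borel f" "\<And>z. \<bar>f z\<bar> \<le> M" and g: "bounded_borel g" "\<And>z. \<bar>g z\<bar> \<le> M"
    and "0 < K" and K: "(\<integral>x. exp (g (x, y)) \<partial>\<nu>) \<le> K"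
  shows "ln (normalizer f y) \<le> ln K + exp M / K * (\<integral>x. \<bar>f (x, y) - g (x, y)\<bar> \<partial>\<nu>)"
proof -
  define t where "t = exp M * (\<integral>x. \<bar>f (x, y) - g (x, y)\<bar> \<partial>\<nu>)"
  have "0 \<le> t" unfolding t_def by simp
  have int: "integrable \<nu> (\<lambda>x. exp (f (x, y)))" "integrable \<nu> (\<lambda>x. exp (g (x, y)))"
    "integrable \<nu> (\<lambda>x. \<bar>f (x, y) - g (x, y)\<bar>)"
    using f(1) g(1) by (auto intro!: integrable_section bounded_borel_exp bounded_borel_abs bounded_borel_diff)
  have "normalizer f y = (\<integral>x. exp (g (x, y)) \<partial>\<nu>) + (\<integral>x. exp (f (x, y)) - exp (g (x, y)) \<partial>\<nu>)"
    unfolding normalizer_def using int by simp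
  also have "(\<integral>x. exp (f (x, y)) - exp (g (x, y)) \<partial>\<nu>) \<le> t"
  proof -
    have "exp (f (x, y)) - exp (g (x, y)) \<le> exp M * \<bar>f (x, y) - g (x, y)\<bar>" for x
      using abs_exp_diff_le[of "f (x, y)" M "g (x, y)"] f(2)[of "(x, y)"] g(2)[of "(x, y)"]
      by (simp add: abs_le_iff)
    then have "(\<integral>x. exp (f (x, y)) - exp (g (x, y)) \<partial>\<nu>) \<le> (\<integral>x. exp M * \<bar>f (x, y) - g (x, y)\<bar> \<partial>\<nu>)"
      using int by (intro integral_mono) auto
    then show ?thesis
      unfolding t_def by simp
  qed
  finally have "normalizer f y \<le> K + t" using K by linarith
  moreover have "0 < normalizer f y"
    using normalizer_bounds(1)[OF f] exp_gt_zero[of "- M"] by (smt (verit))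
  moreover have "K * (1 + t / K) = K + t"
    using \<open>0 < K\<close> by (simp add: field_simps)
  ultimately have "ln (normalizer f y) \<le> ln (K * (1 + t / K))"
    by simp
  also have "\<dots> = ln K + ln (1 + t / K)"
    using \<open>0 < K\<close> \<open>0 \<le> t\<close> by (intro ln_mult_pos) (auto simp: add_pos_nonneg)
  also have "ln (1 + t / K) \<le> t / K"
    using \<open>0 < K\<close> \<open>0 \<le> t\<close> by (intro ln_add_one_self_le_self) auto
  finally show ?thesis
    unfolding t_def by simp
qed

lemma integral_ln_normalizer_le:
  assumes lip: "L-lipschitz_on UNIV f" and f: "\<And>z. \<bar>f z\<bar> \<le> M"
    and g: "bounded_borel g" "\<And>z. \<bar>g z\<bar> \<le> M"
    and "0 < K" and K: "\<And>y. (\<integral>x. exp (g (x, y)) \<partial>\<nu>) \<le> K"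
  shows "(\<integral>z. ln (normalizer f (snd z)) \<partial>\<pi>) \<le> ln K + exp M / K * (\<integral>z. \<bar>f z - g z\<bar> \<partial>\<rho>)"
proof -
  interpret prob_space \<pi> by (rule prob_\<pi>)
  have f_borel: "bounded_borel f"
    using bounded_lipschitzI[OF lip f] by (rule bounded_lipschitz_imp_bounded_borel)
  have dist: "bounded_borel (\<lambda>z. \<bar>f z - g z\<bar>)"
    using f_borel g(1) by (intro bounded_borel_abs bounded_borel_diff)
  have "integrable \<pi> (\<lambda>z. ln (normalizer f (snd z)))"
    using approx.finite_M1 sets_\<pi> bounded_lipschitz_ln_normalizer[OF lip f]
    by (intro bounded_borel_integrable bounded_lipschitz_imp_bounded_borel)
  then have "(\<integral>z. ln (normalizer f (snd z)) \<partial>\<pi>)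
      \<le> (\<integral>z. ln K + exp M / K * (\<integral>x. \<bar>f (x, snd z) - g (x, snd z)\<bar> \<partial>\<nu>) \<partial>\<pi>)"
    using integral_section_snd(1)[OF dist] ln_normalizer_le[OF f_borel f g \<open>0 < K\<close> K]
    by (intro integral_mono) auto
  also have "\<dots> = ln K + exp M / K * (\<integral>z. \<bar>f z - g z\<bar> \<partial>\<rho>)"
    using integral_section_snd[OF dist] by (simp add: prob_space)
  finally show ?thesis .
qed

lemma integral_sub_ln_le_sup_lipschitz:
  assumes g: "bounded_borel g" "\<And>z. \<bar>g z\<bar> \<le> M"
    and "0 < K" and K: "\<And>y. (\<integral>x. exp (g (x, y)) \<partial>\<nu>) \<le> K"
  shows "ereal (integral\<^sup>L \<pi> g - ln K) \<le> sup_lipschitz"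
proof (rule ereal_le_epsilon2)
  fix e :: real assume "0 < e"
  define c where "c = exp M / K"
  define \<delta> where "\<delta> = e / (1 + c)"
  have "0 \<le> c" unfolding c_def using \<open>0 < K\<close> by simp
  then have "0 < \<delta>" and "(1 + c) * \<delta> = e"
    unfolding \<delta>_def using \<open>0 < e\<close> by simp_all
  then have e_eq: "\<delta> + c * \<delta> = e"
    by (simp add: algebra_simps)
  obtain f L where lip: "L-lipschitz_on UNIV f" and bound: "\<And>z. \<bar>f z\<bar> \<le> M"
    and err_\<pi>: "(\<integral>z. \<bar>f z - g z\<bar> \<partial>\<pi>) < \<delta>" and err_\<rho>: "(\<integral>z. \<bar>f z - g z\<bar> \<partial>\<rho>) < \<delta>"
    using approx.bounded_lipschitz_approx_within_bound[OF g \<open>0 < \<delta>\<close>] by blast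
  define F where "F z = f z - ln (normalizer f (snd z))" for z
  have f: "bounded_lipschitz f" "bounded_borel f"
    using bounded_lipschitzI[OF lip bound] by (auto intro: bounded_lipschitz_imp_bounded_borel)
  have int: "integrable \<pi> h" if "bounded_borel h" for h
    using approx.finite_M1 sets_\<pi> that by (rule bounded_borel_integrable)
  have "ereal (integral\<^sup>L \<pi> F) \<le> sup_lipschitz"
    unfolding sup_lipschitz_def F_def by (intro SUP_upper normalize_in_normalized_lipschitz f)
  moreover have "integral\<^sup>L \<pi> F = integral\<^sup>L \<pi> f - (\<integral>z. ln (normalizer f (snd z)) \<partial>\<pi>)"
    unfolding F_def using int[OF f(2)] int[OF bounded_lipschitz_imp_bounded_borel[OF
        bounded_lipschitz_ln_normalizer[OF lip bound]]]
    by (rule Bochner_Integration.integral_diff)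
  moreover have "integral\<^sup>L \<pi> g - integral\<^sup>L \<pi> f \<le> \<delta>"
  proof -
    have "integral\<^sup>L \<pi> g - integral\<^sup>L \<pi> f = (\<integral>z. g z - f z \<partial>\<pi>)"
      using int[OF g(1)] int[OF f(2)] by (rule Bochner_Integration.integral_diff[symmetric])
    also have "\<dots> \<le> (\<integral>z. \<bar>f z - g z\<bar> \<partial>\<pi>)"
      using int[OF g(1)] int[OF f(2)] by (intro integral_mono) auto
    finally show ?thesis using err_\<pi> by linarith
  qed
  moreover have "(\<integral>z. ln (normalizer f (snd z)) \<partial>\<pi>) \<le> ln K + c * \<delta>"
    using integral_ln_normalizer_le[OF lip bound g \<open>0 < K\<close> K] err_\<rho> \<open>0 \<le> c\<close>
      mult_left_mono[of "\<integral>z. \<bar>f z - g z\<bar> \<partial>\<rho>" \<delta> c] unfolding c_def by linarith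
  ultimately have "ereal (integral\<^sup>L \<pi> g - ln K) \<le> ereal (integral\<^sup>L \<pi> F) + ereal e"
    and "ereal (integral\<^sup>L \<pi> F) \<le> sup_lipschitz"
    using e_eq by simp_all
  then show "ereal (integral\<^sup>L \<pi> g - ln K) \<le> sup_lipschitz + ereal e"
    by (meson add_right_mono order_trans)
qed

lemma integral_exp_clip_le:
  fixes c :: "'a \<times> 'b \<Rightarrow> real"
  assumes "c \<in> borel_measurable borel" "(\<integral>\<^sup>+ x. ennreal (exp (c (x, y))) \<partial>\<nu>) = 1"
  shows "(\<integral>x. exp (clip (real n) (c (x, y))) \<partial>\<nu>) \<le> 1 + exp (- real n)"
proof -
  interpret prob_space \<nu> by (rule prob_\<nu>)
  have c_section: "(\<lambda>x. c (x, y)) \<in> borel_measurable \<nu>"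
    using borel_measurable_section[OF assms(1)] by (simp add: measurable_cong_sets[OF sets_\<nu> refl])
  have "exp (clip (real n) t) \<le> exp t + exp (- real n)" for t
    by (cases "- real n \<le> t") (auto simp: clip_def add_increasing2 add_increasing)
  then have "(\<integral>\<^sup>+ x. ennreal (exp (clip (real n) (c (x, y)))) \<partial>\<nu>)
      \<le> (\<integral>\<^sup>+ x. ennreal (exp (c (x, y))) + ennreal (exp (- real n)) \<partial>\<nu>)"
    by (intro nn_integral_mono) (simp add: ennreal_plus[symmetric] del: ennreal_plus)
  also have "\<dots> = ennreal (1 + exp (- real n))"
    using c_section assms(2) by (simp add: nn_integral_add emeasure_space_1 ennreal_plus)
  moreover have "(\<integral>\<^sup>+ x. ennreal (exp (clip (real n) (c (x, y)))) \<partial>\<nu>)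
      = ennreal (\<integral>x. exp (clip (real n) (c (x, y))) \<partial>\<nu>)"
    using integrable_section[OF bounded_borel_exp[OF bounded_borel_clip[OF assms(1)]]]
    by (intro nn_integral_eq_integral) auto
  ultimately have "ennreal (\<integral>x. exp (clip (real n) (c (x, y))) \<partial>\<nu>) \<le> ennreal (1 + exp (- real n))"
    by (simp only:)
  then show ?thesis
    by (subst (asm) ennreal_le_iff) (auto simp: add_nonneg_nonneg)
qed

lemma sup_lipschitz_nonneg: "0 \<le> sup_lipschitz"
proof -
  have "(\<lambda>z. 0) \<in> normalized_lipschitz"
    using prob_space.emeasure_space_1[OF prob_\<nu>]
    by (auto simp: normalized_lipschitz_def intro: lipschitz_on_constant)
  then have "ereal (integral\<^sup>L \<pi> (\<lambda>z. 0)) \<le> sup_lipschitz"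
    unfolding sup_lipschitz_def by (rule SUP_upper)
  then show ?thesis by (simp add: zero_ereal_def)
qed

lemma ext_integral_le_sup_lipschitz:
  assumes c: "c \<in> wd_functions \<pi>" and normalized: "\<And>y. (\<integral>\<^sup>+ x. ennreal (exp (c (x, y))) \<partial>\<nu>) = 1"
  shows "ext_integral \<pi> c \<le> sup_lipschitz"
proof (cases "(\<integral>\<^sup>+ z. ennreal (- c z) \<partial>\<pi>) = \<infinity>")
  case True
  then show ?thesis
    using c unfolding ext_integral_def wd_functions_def
    by (simp add: enn2ereal_eq_ereal_enn2real top.not_eq_extremum)
next
  case False
  show ?thesis
  proof (cases sup_lipschitz)
    case (real s)
    have c_borel: "c \<in> borel_measurable borel"
      using c measurable_cong_sets[OF sets_\<pi> refl] unfolding wd_functions_def by auto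
    have clip_le: "(\<integral>z. clip (real n) (c z) \<partial>\<pi>) \<le> s + ln (1 + exp (- real n))" for n
    proof -
      have "ereal ((\<integral>z. clip (real n) (c z) \<partial>\<pi>) - ln (1 + exp (- real n))) \<le> sup_lipschitz"
        using c_borel
        by (intro integral_sub_ln_le_sup_lipschitz[where M="real n"] bounded_borel_clip abs_clip_le
            integral_exp_clip_le normalized) (auto simp: add_pos_nonneg)
      then show ?thesis using real by simp
    qed
    have "(\<lambda>n. s + ln (1 + exp (- real n))) \<longlonglongrightarrow> s + ln (1 + 0)"
      by (intro tendsto_intros filterlim_compose[OF exp_at_bot]
          filterlim_compose[OF filterlim_uminus_at_bot_at_top filterlim_real_sequentially]) auto
    then have "(\<lambda>n. s + ln (1 + exp (- real n))) \<longlonglongrightarrow> s"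
      by simp
    moreover have "c \<in> borel_measurable \<pi>"
      using c unfolding wd_functions_def by simp
    ultimately show ?thesis
      unfolding real using prob_space.finite_measure[OF prob_\<pi>] False clip_le
      by (intro ext_integral_le_of_clip) (auto simp: top.not_eq_extremum)
  qed (use sup_lipschitz_nonneg in auto)
qed

lemma normalized_lipschitz_integrable:
  assumes "f \<in> normalized_lipschitz"
  shows "integrable \<pi> f"
proof -
  have "compact (UNIV :: ('a \<times> 'b) set)"
    using compact_Times[OF compact_A compact_B] by simp
  then have "bounded_lipschitz f"
    using assms unfolding normalized_lipschitz_def by (blast intro: lipschitz_on_compact_space_bounded)
  then show ?thesis
    using approx.finite_M1 sets_\<pi> by (blast intro: bounded_borel_integrable bounded_lipschitz_imp_bounded_borel)
qed

lemma sup_ext_integral_eq_sup_lipschitz: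
  "(SUP c \<in> normalized_wd_functions. ext_integral \<pi> c) = sup_lipschitz"
proof (rule antisym)
  show "(SUP c \<in> normalized_wd_functions. ext_integral \<pi> c) \<le> sup_lipschitz"
    unfolding normalized_wd_functions_def by (intro SUP_least ext_integral_le_sup_lipschitz) auto
  show "sup_lipschitz \<le> (SUP c \<in> normalized_wd_functions. ext_integral \<pi> c)"
    unfolding sup_lipschitz_def
  proof (rule SUP_least)
    fix f assume f: "f \<in> normalized_lipschitz"
    then have "integrable \<pi> f" by (rule normalized_lipschitz_integrable)
    with f show "ereal (integral\<^sup>L \<pi> f) \<le> (SUP c \<in> normalized_wd_functions. ext_integral \<pi> c)"
      unfolding ext_integral_integrable[OF \<open>integrable \<pi> f\<close>, symmetric]
      by (intro SUP_upper)
        (auto simp: normalized_lipschitz_def normalized_wd_functions_def integrable_imp_wd_functions)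
  qed
qed

end

theorem mainTheorem7:
  fixes \<nu> :: "'a::metric_space measure" and \<pi> :: "('a \<times> 'b::metric_space) measure"
  assumes "compact (UNIV :: 'a set)" and "compact (UNIV :: 'b set)"
    and "sets \<nu> = sets borel" and "prob_space \<nu>"
    and "sets \<pi> = sets borel" and "prob_space \<pi>"
  shows "H_nu \<nu> \<pi> = - (SUP f \<in> {f :: 'a \<times> 'b \<Rightarrow> real. (\<exists>L. L-lipschitz_on UNIV f) \<and>
            (\<forall>y. (\<integral>\<^sup>+ x. ennreal (exp (f (x, y))) \<partial>\<nu>) = 1)}. ereal (integral\<^sup>L \<pi> f))"
proof -
  interpret compact_coupling \<nu> \<pi>
    using assms by (simp add: compact_coupling_def)
  show ?thesis
    using sup_ext_integral_eq_sup_lipschitz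
    unfolding H_nu_def normalized_wd_functions_def sup_lipschitz_def normalized_lipschitz_def by simp
qed

end
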